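(* Let $G$ be a simple graph on $n$ vertices with $cM_2(G)\ge cM_2(H)$ for every simple graph $H$ on $n$ vertices, and let $F$, $X$, $Y$ be as defined in the context. If $u\in X$, $v\in Y$ and $uv\in E(G)$, then $\overrightarrow{uv}$ is an arc of $F$ (in particular $d_G(u)>d_G(v)$).
   Context: All graphs are finite and simple; $d_G(u)$ is the degree of $u$ and $cM_2(G)=\sum_{uv\in E(G)}|d_G(u)^2-d_G(v)^2|$. The canonical mixed graph $F$ of $G$ has vertex set $V(G)$; for each edge $uv\in E(G)$: if $d_G(u)>d_G(v)$ then $F$ contains the arc $\overrightarrow{uv}$, and if $d_G(u)=d_G(v)$ then $F$ contains the undirected edge $uv$. $d^+_F(u)$ (resp. $d^-_F(u)$) is the number of arcs of $F$ with tail (resp. head) $u$. $X=\{u\in V(G): d^+_F(u)\ge d^-_F(u)\}$ and $Y=\{u\in V(G): d^+_F(u)< d^-_F(u)\}$. *)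

theory Defs
  imports Main
begin

definition simple_graph :: "nat \<Rightarrow> nat set set \<Rightarrow> bool" where
  "simple_graph n E \<longleftrightarrow> E \<subseteq> {{u, v} | u v. u < n \<and> v < n \<and> u \<noteq> v}"

definition deg :: "nat set set \<Rightarrow> nat \<Rightarrow> nat" where
  "deg E u = card {v. {u, v} \<in> E}"

definition cM2 :: "nat set set \<Rightarrow> int" where
  "cM2 E = (\<Sum>(u, v) \<in> {(u, v). {u, v} \<in> E \<and> u < v}.
              \<bar>int (deg E u) ^ 2 - int (deg E v) ^ 2\<bar>)"

text \<open>Arcs of the canonical mixed graph F.\<close>
definition arc :: "nat set set \<Rightarrow> nat \<Rightarrow> nat \<Rightarrow> bool" where
  "arc E u v \<longleftrightarrow> {u, v} \<in> E \<and> deg E u > deg E v"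

definition outdeg :: "nat set set \<Rightarrow> nat \<Rightarrow> nat" where
  "outdeg E u = card {v. arc E u v}"

definition indeg :: "nat set set \<Rightarrow> nat \<Rightarrow> nat" where
  "indeg E u = card {v. arc E v u}"

definition Xset :: "nat \<Rightarrow> nat set set \<Rightarrow> nat set" where
  "Xset n E = {u. u < n \<and> outdeg E u \<ge> indeg E u}"

definition Yset :: "nat \<Rightarrow> nat set set \<Rightarrow> nat set" where
  "Yset n E = {u. u < n \<and> outdeg E u < indeg E u}"

end

theory Submission
  imports Defs
begin

text \<open>
  Suppose the edge \<open>uv\<close> were not an arc, i.e. \<open>d(u) \<le> d(v)\<close>. Counting the neighbours of \<open>u\<close> and
  \<open>v\<close> of degree at least their own shows that \<open>v\<close> has a neighbour \<open>w \<noteq> u\<close> with \<open>d(w) \<ge> d(v)\<close>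
  that is not adjacent to \<open>u\<close>. Replace the edge \<open>vw\<close> by \<open>uw\<close>: this raises \<open>d(u)\<close> and lowers
  \<open>d(v)\<close> by one and changes no other degree. Each edge \<open>ux\<close> gains \<open>2d(u)+1\<close> if \<open>d(x) < d(u)\<close>
  and loses it if \<open>d(x) > d(u)\<close>, and symmetrically at \<open>v\<close>; since \<open>u \<in> X\<close> and \<open>v \<in> Y\<close> these
  contributions add up to a net gain, so \<open>cM\<^sub>2\<close> strictly increases, contradicting maximality.
\<close>

definition nbhd :: "nat set set \<Rightarrow> nat \<Rightarrow> nat set" where
  "nbhd E x = {y. {x, y} \<in> E}"

lemma deg_eq_card_nbhd: "deg E x = card (nbhd E x)"
  by (simp add: deg_def nbhd_def)

lemma simple_graph_edgeD: "simple_graph n E \<Longrightarrow> {x, y} \<in> E \<Longrightarrow> x \<noteq> y \<and> x < n \<and> y < n"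
  unfolding simple_graph_def by (auto simp: doubleton_eq_iff)

lemma simple_graph_edgeE:
  assumes "simple_graph n E" and "e \<in> E"
  obtains x y where "e = {x, y}" and "x \<noteq> y"
  using assms unfolding simple_graph_def by blast

lemma simple_graph_subset: "simple_graph n E \<Longrightarrow> E' \<subseteq> E \<Longrightarrow> simple_graph n E'"
  unfolding simple_graph_def by blast

lemma finite_nbhd: "simple_graph n E \<Longrightarrow> finite (nbhd E x)"
  by (rule finite_subset[of _ "{..<n}"]) (auto simp: nbhd_def dest: simple_graph_edgeD)

lemma finite_edges: "simple_graph n E \<Longrightarrow> finite E"
  unfolding simple_graph_def by (rule finite_subset[of _ "Pow {..<n}"]) auto

lemma outdeg_eq_card_nbhd: "outdeg E x = card {y \<in> nbhd E x. deg E y < deg E x}"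
  by (simp add: outdeg_def arc_def nbhd_def)

lemma indeg_eq_card_nbhd: "indeg E x = card {y \<in> nbhd E x. deg E x < deg E y}"
  by (simp add: indeg_def arc_def nbhd_def insert_commute)

lemma deg_eq_outdeg_plus_card_upper:
  assumes "finite (nbhd E x)"
  shows "deg E x = outdeg E x + card {y \<in> nbhd E x. deg E x \<le> deg E y}"
proof -
  let ?lower = "{y \<in> nbhd E x. deg E y < deg E x}" and ?upper = "{y \<in> nbhd E x. deg E x \<le> deg E y}"
  have "nbhd E x = ?lower \<union> ?upper"
    by auto
  moreover have "card (?lower \<union> ?upper) = card ?lower + card ?upper"
    by (rule card_Un_disjoint) (use assms in auto)
  ultimately show ?thesis
    by (simp only: deg_eq_card_nbhd outdeg_eq_card_nbhd)
qed

lemma sum_sgn_deg_diff: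
  assumes "finite (nbhd E x)"
  shows "(\<Sum>y\<in>nbhd E x. sgn (int (deg E x) - int (deg E y))) = int (outdeg E x) - int (indeg E x)"
proof -
  have "sgn (int (deg E x) - int (deg E y))
      = (if deg E y < deg E x then 1 else 0) - (if deg E x < deg E y then 1 else 0)" for y
    by (simp add: sgn_if)
  then show ?thesis
    using assms by (simp add: sum_subtractf sum.If_cases Int_def conj_commute
        outdeg_eq_card_nbhd indeg_eq_card_nbhd)
qed

lemma exists_edge_to_move:
  assumes sg: "simple_graph n E" and e: "{u, v} \<in> E"
    and u: "indeg E u \<le> outdeg E u" and v: "outdeg E v < indeg E v"
    and le: "deg E u \<le> deg E v"
  shows "\<exists>w. {v, w} \<in> E \<and> w \<noteq> u \<and> {u, w} \<notin> E \<and> deg E v \<le> deg E w"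
proof (rule ccontr)
  assume "\<not> ?thesis"
  then have partner: "{u, y} \<in> E" if "{v, y} \<in> E" "y \<noteq> u" "deg E v \<le> deg E y" for y
    using that by blast
  define up where "up x = {y \<in> nbhd E x. deg E x \<le> deg E y}" for x
  have fin: "finite (nbhd E x)" for x
    using sg by (rule finite_nbhd)
  have fin_up: "finite (up x)" for x
    using fin by (simp add: up_def)
  have "v \<notin> up v"
    using simple_graph_edgeD[OF sg, of v v] by (auto simp: up_def nbhd_def)
  then have "card (up v) \<le> card (insert v (up v - {u}))"
    using fin by (auto simp: up_def card_Diff_singleton_if)
  also have "\<dots> \<le> card (up u)"
    using e le partner by (intro card_mono fin_up) (auto simp: up_def nbhd_def)
  finally have up_le: "card (up v) \<le> card (up u)" .
  have "indeg E v \<le> indeg E u"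
    unfolding indeg_eq_card_nbhd using le partner
    by (intro card_mono) (auto simp: nbhd_def fin[unfolded nbhd_def] intro!: partner)
  then have "deg E v < deg E u"
    using deg_eq_outdeg_plus_card_upper[OF fin, of u] deg_eq_outdeg_plus_card_upper[OF fin, of v]
      u v up_le by (simp add: up_def)
  then show False
    using le by simp
qed

definition sq_gap :: "nat \<Rightarrow> nat \<Rightarrow> int" where
  "sq_gap p q = \<bar>int p ^ 2 - int q ^ 2\<bar>"

lemma sq_gap_commute: "sq_gap p q = sq_gap q p"
  by (simp add: sq_gap_def abs_minus_commute)

lemma sq_gap_Suc_diff:
  "sq_gap (Suc a) D - sq_gap a D = (if D \<le> a then 2 * int a + 1 else - (2 * int a + 1))"
proof (cases "D \<le> a")
  case True
  then have "int D ^ 2 \<le> int a ^ 2"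
    by (simp add: power_mono)
  with True show ?thesis
    by (simp add: sq_gap_def power2_eq_square algebra_simps)
next
  case False
  then have "int (Suc a) ^ 2 \<le> int D ^ 2"
    by (intro power_mono) auto
  with False show ?thesis
    by (simp add: sq_gap_def power2_eq_square algebra_simps)
qed

lemma raise_deg_gain_ge:
  assumes fin: "finite (nbhd E x)" and y: "y \<in> nbhd E x"
    and x: "indeg E x \<le> outdeg E x" and le: "deg E x \<le> deg E y"
  shows "(2 * int (deg E x) + 1) * (if deg E x < deg E y then 1 else 0)
     \<le> (\<Sum>z\<in>nbhd E x - {y}. sq_gap (Suc (deg E x)) (deg E z) - sq_gap (deg E x) (deg E z))"
proof -
  let ?s = "\<lambda>z. sgn (int (deg E x) - int (deg E z))"
  have "int (outdeg E x) - int (indeg E x) = ?s y + (\<Sum>z\<in>nbhd E x - {y}. ?s z)"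
    using sum_sgn_deg_diff[OF fin] sum.remove[OF fin y, of ?s] by simp
  moreover have "?s y = - (if deg E x < deg E y then 1 else 0)"
    using le by (simp add: sgn_if)
  ultimately have "(if deg E x < deg E y then 1 else 0) \<le> (\<Sum>z\<in>nbhd E x - {y}. ?s z)"
    using x by linarith
  then have "(2 * int (deg E x) + 1) * (if deg E x < deg E y then 1 else 0)
      \<le> (2 * int (deg E x) + 1) * (\<Sum>z\<in>nbhd E x - {y}. ?s z)"
    by (rule mult_left_mono) simp
  also have "\<dots> \<le> (\<Sum>z\<in>nbhd E x - {y}. sq_gap (Suc (deg E x)) (deg E z) - sq_gap (deg E x) (deg E z))"
    unfolding sum_distrib_left by (rule sum_mono) (simp add: sq_gap_Suc_diff sgn_if)
  finally show ?thesis .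
qed

lemma lower_deg_gain_ge:
  assumes fin: "finite (nbhd E x)" and y: "y \<in> nbhd E x" and z: "z \<in> nbhd E x" "z \<noteq> y"
    and x: "outdeg E x < indeg E x" and le: "deg E y \<le> deg E x"
  shows "(2 * int (deg E x) - 1) * (if deg E y < deg E x then 1 else 0)
     \<le> (\<Sum>t\<in>nbhd E x - {y, z}. sq_gap (deg E x - 1) (deg E t) - sq_gap (deg E x) (deg E t))"
proof -
  let ?s = "\<lambda>t. sgn (int (deg E t) - int (deg E x))"
  obtain c where c: "deg E x = Suc c"
    using y fin by (cases "deg E x") (auto simp: deg_eq_card_nbhd)
  have "int (indeg E x) - int (outdeg E x) = (\<Sum>t\<in>nbhd E x. ?s t)"
    using sum_sgn_deg_diff[OF fin] sgn_minus[of "int (deg E x) - int (deg E t)" for t]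
    by (simp add: sum_negf)
  also have "\<dots> = ?s y + ?s z + (\<Sum>t\<in>nbhd E x - {y, z}. ?s t)"
    using sum.remove[OF fin y, of ?s] sum.remove[of "nbhd E x - {y}" z ?s] fin z
    by (simp add: Diff_insert2[symmetric])
  finally have "(if deg E y < deg E x then 1 else 0) \<le> (\<Sum>t\<in>nbhd E x - {y, z}. ?s t)"
    using x le by (simp add: sgn_if split: if_splits)
  then have "(2 * int (deg E x) - 1) * (if deg E y < deg E x then 1 else 0)
      \<le> (2 * int (deg E x) - 1) * (\<Sum>t\<in>nbhd E x - {y, z}. ?s t)"
    by (rule mult_left_mono) (simp add: c)
  also have "\<dots> \<le> (\<Sum>t\<in>nbhd E x - {y, z}. sq_gap (deg E x - 1) (deg E t) - sq_gap (deg E x) (deg E t))"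
  proof -
    have step: "(2 * int (Suc c) - 1) * sgn (int D - int (Suc c))
        \<le> sq_gap (Suc c - 1) D - sq_gap (Suc c) D" for D
      using sq_gap_Suc_diff[of c D] by (cases "D \<le> c") (simp_all add: sgn_if)
    show ?thesis
      unfolding sum_distrib_left c by (intro sum_mono step)
  qed
  finally show ?thesis .
qed

definition edge_weight :: "nat set set \<Rightarrow> nat set \<Rightarrow> int" where
  "edge_weight E e = sq_gap (deg E (Min e)) (deg E (Max e))"

lemma edge_weight_doubleton: "edge_weight E {x, y} = sq_gap (deg E x) (deg E y)"
  by (cases "x \<le> y") (auto simp: edge_weight_def max_def min_def sq_gap_commute)

lemma cM2_eq_sum_edges:
  assumes sg: "simple_graph n E"
  shows "cM2 E = (\<Sum>e\<in>E. edge_weight E e)"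
proof -
  let ?P = "{(u, v). {u, v} \<in> E \<and> u < v}"
  let ?edge = "\<lambda>(x, y). {x, y} :: nat set"
  have inj: "inj_on ?edge ?P"
    by (auto simp: inj_on_def doubleton_eq_iff)
  have image: "?edge ` ?P = E"
  proof (intro equalityI subsetI)
    fix e assume "e \<in> E"
    moreover obtain x y where "e = {x, y}" "x \<noteq> y"
      using simple_graph_edgeE[OF sg \<open>e \<in> E\<close>] .
    ultimately show "e \<in> ?edge ` ?P"
      by (cases "x < y")
        (auto simp: insert_commute intro: image_eqI[of _ _ "(x, y)"] image_eqI[of _ _ "(y, x)"])
  qed auto
  have "cM2 E = (\<Sum>p\<in>?P. edge_weight E (?edge p))"
    unfolding cM2_def by (rule sum.cong) (auto simp: edge_weight_doubleton sq_gap_def)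
  then show ?thesis
    using sum.reindex[OF inj, of "edge_weight E"] image by (simp add: comp_def)
qed

lemma sum_edges_at_vertex:
  assumes "simple_graph n E"
  shows "(\<Sum>e\<in>{e \<in> E. x \<in> e}. f e) = (\<Sum>y\<in>nbhd E x. f {x, y})"
proof -
  have "{e \<in> E. x \<in> e} = (\<lambda>y. {x, y}) ` nbhd E x"
  proof (intro equalityI subsetI)
    fix e assume e: "e \<in> {e \<in> E. x \<in> e}"
    then obtain y z where "e = {y, z}"
      using simple_graph_edgeE[OF assms] by blast
    with e show "e \<in> (\<lambda>y. {x, y}) ` nbhd E x"
      by (auto simp: nbhd_def insert_commute)
  qed (auto simp: nbhd_def)
  moreover have "inj_on (\<lambda>y. {x, y}) (nbhd E x)"
    by (auto simp: inj_on_def doubleton_eq_iff)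
  ultimately show ?thesis
    by (simp add: sum.reindex)
qed

lemma sum_edges_at_two_vertices:
  assumes sg: "simple_graph n E" and "u \<noteq> v"
    and vanish: "\<And>e. e \<in> E \<Longrightarrow> u \<notin> e \<Longrightarrow> v \<notin> e \<Longrightarrow> f e = 0"
  shows "(\<Sum>e\<in>E. f e) = (\<Sum>x\<in>nbhd E u. f {u, x}) + (\<Sum>y\<in>nbhd E v - {u}. f {v, y})"
proof -
  let ?E\<^sub>u = "{e \<in> E. u \<notin> e}"
  have sg_u: "simple_graph n ?E\<^sub>u"
    using sg by (rule simple_graph_subset) auto
  have fin: "finite E"
    using sg by (rule finite_edges)
  have nbhd_v: "nbhd ?E\<^sub>u v = nbhd E v - {u}"
    using \<open>u \<noteq> v\<close> by (auto simp: nbhd_def)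
  have "(\<Sum>e\<in>E. f e) = (\<Sum>e\<in>{e \<in> E. u \<in> e}. f e) + (\<Sum>e\<in>?E\<^sub>u. f e)"
    using fin
    by (simp add: sum.inter_filter[symmetric] sum.Int_Diff[of E f "{e. u \<in> e}"] Diff_eq Int_def)
  also have "(\<Sum>e\<in>?E\<^sub>u. f e) = (\<Sum>e\<in>{e \<in> ?E\<^sub>u. v \<in> e}. f e)"
    using fin vanish by (intro sum.mono_neutral_right) auto
  finally show ?thesis
    using sum_edges_at_vertex[OF sg, where x=u and f=f]
      sum_edges_at_vertex[OF sg_u, where x=v and f=f]
    by (simp add: nbhd_v)
qed

text \<open>The conditional summand is the gain on the remaining edges at \<open>u\<close> and \<open>v\<close>, as bounded
  by \<open>raise_deg_gain_ge\<close> and \<open>lower_deg_gain_ge\<close>.\<close>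

lemma edge_move_gain_pos:
  fixes a b d :: nat
  assumes "a \<le> b" "b \<le> d" "1 \<le> b"
  shows "0 < (sq_gap (Suc a) d - sq_gap b d) + (sq_gap (Suc a) (b - 1) - sq_gap a b)
             + (if a < b then 2 * int a + 1 + (2 * int b - 1) else 0)"
proof -
  obtain c where b: "b = Suc c"
    using assms(3) by (cases b) auto
  have squares: "int a ^ 2 \<le> int b ^ 2" "int b ^ 2 \<le> int d ^ 2"
    using assms by (simp_all add: power_mono)
  consider "a = b" | "b = Suc a" | "Suc (Suc a) \<le> b"
    using assms(1) by linarith
  then show ?thesis
  proof cases
    case 1
    then show ?thesis
      using assms squares by (cases "b = d") (auto simp: sq_gap_def b power2_eq_square algebra_simps)
  next
    case 2
    then show ?thesis
      using assms squares by (auto simp: sq_gap_def b power2_eq_square algebra_simps)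
  next
    case 3
    then have "int (Suc a) ^ 2 \<le> int c ^ 2"
      by (intro power_mono) (auto simp: b)
    then show ?thesis
      using 3 assms squares by (auto simp: sq_gap_def b power2_eq_square algebra_simps)
  qed
qed

locale edge_move =
  fixes n :: nat and E :: "nat set set" and u v w :: nat
  assumes simple: "simple_graph n E"
    and edge_uv: "{u, v} \<in> E" and edge_vw: "{v, w} \<in> E"
    and not_edge_uw: "{u, w} \<notin> E" and u_ne_w: "u \<noteq> w"
begin

definition moved :: "nat set set" where
  "moved = insert {u, w} (E - {{v, w}})"

lemma u_ne_v: "u \<noteq> v" and v_ne_w: "v \<noteq> w"
  using simple_graph_edgeD[OF simple edge_uv] simple_graph_edgeD[OF simple edge_vw] by auto

lemma simple_graph_moved: "simple_graph n moved"
proof -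
  have "u < n" "w < n"
    using simple_graph_edgeD[OF simple edge_uv] simple_graph_edgeD[OF simple edge_vw] by auto
  then show ?thesis
    using simple u_ne_w unfolding simple_graph_def moved_def by blast
qed

lemma nbhd_moved:
  "nbhd moved u = insert w (nbhd E u)"
  "nbhd moved v = nbhd E v - {w}"
  "nbhd moved w = insert u (nbhd E w - {v})"
  "x \<notin> {u, v, w} \<Longrightarrow> nbhd moved x = nbhd E x"
  using u_ne_v v_ne_w u_ne_w by (auto simp: moved_def nbhd_def doubleton_eq_iff)

lemma deg_moved:
  "deg moved u = Suc (deg E u)"
  "deg moved v = deg E v - 1"
  "x \<noteq> u \<Longrightarrow> x \<noteq> v \<Longrightarrow> deg moved x = deg E x"
proof -
  have fin: "finite (nbhd E x)" for x
    using simple by (rule finite_nbhd)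
  have nbhd_facts: "w \<notin> nbhd E u" "w \<in> nbhd E v" "u \<notin> nbhd E w" "v \<in> nbhd E w"
    using not_edge_uw edge_vw by (auto simp: nbhd_def insert_commute)
  then show "deg moved u = Suc (deg E u)" "deg moved v = deg E v - 1"
    using fin by (simp_all add: deg_eq_card_nbhd nbhd_moved)
  show "deg moved x = deg E x" if "x \<noteq> u" "x \<noteq> v"
  proof (cases "x = w")
    case True
    then show ?thesis
      using nbhd_facts fin[of w] card_gt_0_iff[of "nbhd E w"]
      by (auto simp: deg_eq_card_nbhd nbhd_moved)
  qed (use that in \<open>simp add: deg_eq_card_nbhd nbhd_moved\<close>)
qed

lemma cM2_moved_diff:
  "cM2 moved - cM2 E =
     (sq_gap (Suc (deg E u)) (deg E w) - sq_gap (deg E v) (deg E w))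
   + (sq_gap (Suc (deg E u)) (deg E v - 1) - sq_gap (deg E u) (deg E v))
   + (\<Sum>x\<in>nbhd E u - {v}. sq_gap (Suc (deg E u)) (deg E x) - sq_gap (deg E u) (deg E x))
   + (\<Sum>y\<in>nbhd E v - {u, w}. sq_gap (deg E v - 1) (deg E y) - sq_gap (deg E v) (deg E y))"
proof -
  let ?kept = "E - {{v, w}}"
  define change where "change e = edge_weight moved e - edge_weight E e" for e
  have fin: "finite E"
    using simple by (rule finite_edges)
  have kept_u: "nbhd ?kept u = nbhd E u" and kept_v: "nbhd ?kept v - {u} = nbhd E v - {u, w}"
    using u_ne_v u_ne_w by (auto simp: nbhd_def doubleton_eq_iff)
  have "cM2 moved - cM2 E
      = (edge_weight moved {u, w} - edge_weight E {v, w}) + (\<Sum>e\<in>?kept. change e)"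
    using cM2_eq_sum_edges[OF simple] cM2_eq_sum_edges[OF simple_graph_moved]
      sum.remove[OF fin edge_vw, of "edge_weight E"] fin not_edge_uw
    by (simp add: moved_def change_def sum_subtractf)
  also have "(\<Sum>e\<in>?kept. change e)
      = (\<Sum>x\<in>nbhd E u. change {u, x}) + (\<Sum>y\<in>nbhd E v - {u, w}. change {v, y})"
    unfolding kept_u[symmetric] kept_v[symmetric]
  proof (rule sum_edges_at_two_vertices)
    show "simple_graph n ?kept"
      using simple by (rule simple_graph_subset) auto
    show "change e = 0" if kept: "e \<in> ?kept" and away: "u \<notin> e" "v \<notin> e" for e
    proof -
      obtain x y where e: "e = {x, y}" "x \<noteq> y"
        using simple_graph_edgeE[OF simple DiffD1[OF kept]] .
      with away have "x \<noteq> u" "x \<noteq> v" "y \<noteq> u" "y \<noteq> v"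
        by auto
      then show ?thesis
        by (simp add: e(1) change_def edge_weight_doubleton deg_moved)
    qed
  qed (rule u_ne_v)
  also have "(\<Sum>x\<in>nbhd E u. change {u, x}) = change {u, v} + (\<Sum>x\<in>nbhd E u - {v}. change {u, x})"
    using edge_uv finite_nbhd[OF simple] by (intro sum.remove) (auto simp: nbhd_def)
  finally have "cM2 moved - cM2 E = (edge_weight moved {u, w} - edge_weight E {v, w})
      + (change {u, v} + (\<Sum>x\<in>nbhd E u - {v}. change {u, x}) + (\<Sum>y\<in>nbhd E v - {u, w}. change {v, y}))"
    by simp
  moreover have "edge_weight moved {u, w} = sq_gap (Suc (deg E u)) (deg E w)"
    and "edge_weight E {v, w} = sq_gap (deg E v) (deg E w)"
    and "change {u, v} = sq_gap (Suc (deg E u)) (deg E v - 1) - sq_gap (deg E u) (deg E v)"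
    using u_ne_w v_ne_w by (simp_all add: change_def edge_weight_doubleton deg_moved)
  moreover have "(\<Sum>x\<in>nbhd E u - {v}. change {u, x})
      = (\<Sum>x\<in>nbhd E u - {v}. sq_gap (Suc (deg E u)) (deg E x) - sq_gap (deg E u) (deg E x))"
    by (intro sum.cong) (auto simp: change_def edge_weight_doubleton deg_moved nbhd_def
        dest: simple_graph_edgeD[OF simple])
  moreover have "(\<Sum>y\<in>nbhd E v - {u, w}. change {v, y})
      = (\<Sum>y\<in>nbhd E v - {u, w}. sq_gap (deg E v - 1) (deg E y) - sq_gap (deg E v) (deg E y))"
    by (intro sum.cong) (auto simp: change_def edge_weight_doubleton deg_moved nbhd_def
        dest: simple_graph_edgeD[OF simple])
  ultimately show ?thesis
    by simp
qed

lemma cM2_moved_gt: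
  assumes u: "indeg E u \<le> outdeg E u" and v: "outdeg E v < indeg E v"
    and uv: "deg E u \<le> deg E v" and vw: "deg E v \<le> deg E w"
  shows "cM2 E < cM2 moved"
proof -
  have fin: "finite (nbhd E x)" for x
    using simple by (rule finite_nbhd)
  have nbrs: "v \<in> nbhd E u" "u \<in> nbhd E v" "w \<in> nbhd E v"
    using edge_uv edge_vw by (auto simp: nbhd_def insert_commute)
  then have "1 \<le> deg E v"
    using fin[of v] by (auto simp: deg_eq_card_nbhd Suc_le_eq card_gt_0_iff)
  then have "0 < cM2 moved - cM2 E"
    using edge_move_gain_pos[OF uv vw] raise_deg_gain_ge[OF fin nbrs(1) u uv]
      lower_deg_gain_ge[OF fin nbrs(2,3) u_ne_w[symmetric] v uv]
    unfolding cM2_moved_diff by (simp split: if_splits)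
  then show ?thesis
    by simp
qed

end

theorem corollary2:
  fixes n :: nat and E :: "nat set set" and u v :: nat
  assumes "simple_graph n E"
    and "\<forall>H. simple_graph n H \<longrightarrow> cM2 H \<le> cM2 E"
    and "u \<in> Xset n E" and "v \<in> Yset n E" and "{u, v} \<in> E"
  shows "arc E u v"
proof (rule ccontr)
  assume "\<not> arc E u v"
  then have le: "deg E u \<le> deg E v"
    using assms(5) by (auto simp: arc_def)
  have u: "indeg E u \<le> outdeg E u" and v: "outdeg E v < indeg E v"
    using assms(3,4) by (simp_all add: Xset_def Yset_def)
  obtain w where w: "{v, w} \<in> E" "w \<noteq> u" "{u, w} \<notin> E" "deg E v \<le> deg E w"
    using exists_edge_to_move[OF assms(1,5) u v le] by blast
  interpret edge_move n E u v w
    using assms(1,5) w by unfold_locales auto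
  have "cM2 E < cM2 moved"
    using u v le w(4) by (rule cM2_moved_gt)
  then show False
    using assms(2) simple_graph_moved by (simp add: not_le[symmetric])
qed

end
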